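(* Every consistent piece-wise quadratic function $g:\mathbb{R}\to\mathbb{R}$ has a non-decreasing indexing function $I_g$.
   Context: A continuous $g$ is piece-wise quadratic with $N$ pieces if there exist $-\infty=\tau_0<\tau_1<\dots<\tau_N=+\infty$ and quadratic $p_1,\dots,p_N$ with $g=p_k$ on $[\tau_{k-1},\tau_k]$ and $p_k\ne p_{k+1}$ as functions; it is consistent if every $p_k$ is strongly convex and $g=\min_kp_k$ on $\mathbb{R}$. For such $g$ with strongly convex pieces, the indexing function is $I_g(\beta)=\min\{k:\ \exists\,\alpha^\star\in\arg\max_\alpha\{\beta\alpha-g(\alpha)\}\text{ with }\tau_{k-1}\le\alpha^\star\le\tau_k\}$. *)

theory Defs
  imports "HOL-Analysis.Analysis" "HOL-Library.Extended_Real"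
begin

type_synonym quad = "real \<times> real \<times> real"

definition qeval :: "quad \<Rightarrow> real \<Rightarrow> real" where
  "qeval q x = fst q * x ^ 2 + fst (snd q) * x + snd (snd q)"

definition strongly_convex_quad :: "quad \<Rightarrow> bool" where
  "strongly_convex_quad q \<longleftrightarrow> fst q > 0"

definition pw_quadratic ::
  "(real \<Rightarrow> real) \<Rightarrow> nat \<Rightarrow> (nat \<Rightarrow> ereal) \<Rightarrow> (nat \<Rightarrow> quad) \<Rightarrow> bool" where
  "pw_quadratic g N tau p \<longleftrightarrow>
     N \<ge> 1 \<and> continuous_on UNIV g \<and>
     tau 0 = -\<infinity> \<and> tau N = \<infinity> \<and>
     (\<forall>k<N. tau k < tau (Suc k)) \<and>
     (\<forall>k\<in>{1..N}. \<forall>x. tau (k - 1) \<le> ereal x \<and> ereal x \<le> tau k \<longrightarrow> g x = qeval (p k) x) \<and>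
     (\<forall>k\<in>{1..<N}. qeval (p k) \<noteq> qeval (p (Suc k)))"

definition consistent_pwq ::
  "(real \<Rightarrow> real) \<Rightarrow> nat \<Rightarrow> (nat \<Rightarrow> ereal) \<Rightarrow> (nat \<Rightarrow> quad) \<Rightarrow> bool" where
  "consistent_pwq g N tau p \<longleftrightarrow>
     pw_quadratic g N tau p \<and>
     (\<forall>k\<in>{1..N}. strongly_convex_quad (p k)) \<and>
     (\<forall>x. g x = Min ((\<lambda>k. qeval (p k) x) ` {1..N}))"

definition indexing_fun ::
  "(real \<Rightarrow> real) \<Rightarrow> (nat \<Rightarrow> ereal) \<Rightarrow> real \<Rightarrow> nat" where
  "indexing_fun g tau beta = (LEAST k. 1 \<le> k \<and> (\<exists>a.
      (\<forall>a'. beta * a' - g a' \<le> beta * a - g a) \<and>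
      tau (k - 1) \<le> ereal a \<and> ereal a \<le> tau k))"

end

theory Submission
  imports Defs
begin

text \<open>Maximisers of \<open>\<beta>\<alpha> - g \<alpha>\<close> move to the right as \<open>\<beta>\<close> grows, for any \<open>g\<close>: adding the two
  optimality inequalities gives \<open>(\<beta>\<^sub>2 - \<beta>\<^sub>1)(\<alpha>\<^sub>2 - \<alpha>\<^sub>1) \<ge> 0\<close>.  For a minimum of finitely many
  strongly convex quadratics a maximiser always exists (take the best vertex of the pieces),
  so the least piece containing a maximiser for \<open>\<beta>\<^sub>2\<close> bounds from the right a maximiser for
  \<open>\<beta>\<^sub>1\<close>, which therefore lies in a piece of no larger index.\<close>

definition is_maximiser :: "(real \<Rightarrow> real) \<Rightarrow> real \<Rightarrow> real \<Rightarrow> bool" where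
  "is_maximiser g beta a \<longleftrightarrow> (\<forall>a'. beta * a' - g a' \<le> beta * a - g a)"

lemma is_maximiser_mono:
  assumes "is_maximiser g beta1 a1" "is_maximiser g beta2 a2" "beta1 < beta2"
  shows "a1 \<le> a2"
proof -
  have "beta1 * a2 - g a2 \<le> beta1 * a1 - g a1" "beta2 * a1 - g a1 \<le> beta2 * a2 - g a2"
    using assms(1,2) unfolding is_maximiser_def by blast+
  then have "(beta2 - beta1) * (a2 - a1) \<ge> 0"
    by (simp add: algebra_simps)
  then show ?thesis
    using assms(3) by (simp add: zero_le_mult_iff)
qed

lemma linear_minus_qeval_le_vertex:
  assumes "fst q > 0"
  shows "beta * a - qeval q a
    \<le> beta * ((beta - fst (snd q)) / (2 * fst q)) - qeval q ((beta - fst (snd q)) / (2 * fst q))"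
proof -
  obtain A B C where q: "q = (A, B, C)" by (cases q) auto
  define v where "v = (beta - B) / (2 * A)"
  have A: "A > 0" using assms q by simp
  have "(beta * v - qeval q v) - (beta * a - qeval q a) = A * (v - a)^2"
    using A by (simp add: q v_def qeval_def field_simps power2_eq_square)
  moreover have "A * (v - a)^2 \<ge> 0"
    using A by simp
  ultimately have "beta * a - qeval q a \<le> beta * v - qeval q v"
    by linarith
  then show ?thesis
    by (simp add: q v_def)
qed

lemma Min_qeval_has_maximiser:
  assumes "finite K" "K \<noteq> {}" "\<And>k. k \<in> K \<Longrightarrow> fst (p k) > 0"
    and g: "\<And>x. g x = Min ((\<lambda>k. qeval (p k) x) ` K)"
  shows "\<exists>a. is_maximiser g beta a"
proof -
  define v where "v k = (beta - fst (snd (p k))) / (2 * fst (p k))" for k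
  define M where "M k = beta * v k - qeval (p k) (v k)" for k
  have piece_le_M: "beta * a - qeval (p k) a \<le> M k" if "k \<in> K" for k a
    unfolding M_def v_def using linear_minus_qeval_le_vertex assms(3) that by blast
  have "Max (M ` K) \<in> M ` K"
    using assms(1,2) by (intro Max_in) auto
  then obtain k0 where k0: "k0 \<in> K" "M k0 = Max (M ` K)"
    by auto
  have M_le: "M k \<le> M k0" if "k \<in> K" for k
    using k0(2) assms(1) that by simp
  have "beta * a - g a \<le> beta * v k0 - g (v k0)" for a
  proof -
    have "g a \<in> (\<lambda>k. qeval (p k) a) ` K"
      unfolding g using assms(1,2) by (intro Min_in) auto
    then obtain k where k: "k \<in> K" "g a = qeval (p k) a"
      by blast
    have "g (v k0) \<le> qeval (p k0) (v k0)"
      using g assms(1) k0(1) by simp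
    then show ?thesis
      using piece_le_M[OF k(1), of a] M_le[OF k(1)] k(2) unfolding M_def by linarith
  qed
  then show ?thesis
    unfolding is_maximiser_def by blast
qed

lemma exists_piece_containing:
  fixes tau :: "nat \<Rightarrow> ereal"
  assumes "tau 0 = -\<infinity>" "ereal a \<le> tau n"
  obtains k where "1 \<le> k" "k \<le> n" "tau (k - 1) \<le> ereal a" "ereal a \<le> tau k"
proof -
  define k where "k = (LEAST k. ereal a \<le> tau k)"
  have a_le: "ereal a \<le> tau k"
    unfolding k_def by (rule LeastI[of _ n]) (rule assms(2))
  have "k \<le> n"
    unfolding k_def by (rule Least_le) (rule assms(2))
  have "k \<noteq> 0"
    using a_le assms(1) by (cases k) auto
  have "tau (k - 1) < ereal a"
    using not_less_Least[of "k - 1" "\<lambda>k. ereal a \<le> tau k"] \<open>k \<noteq> 0\<close>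
    unfolding k_def by (simp add: not_le)
  then show ?thesis
    using that[of k] a_le \<open>k \<le> n\<close> \<open>k \<noteq> 0\<close> by (simp add: less_imp_le)
qed

lemma indexing_fun_eq_Least:
  "indexing_fun g tau beta = (LEAST k. 1 \<le> k \<and>
     (\<exists>a. is_maximiser g beta a \<and> tau (k - 1) \<le> ereal a \<and> ereal a \<le> tau k))"
  unfolding indexing_fun_def is_maximiser_def by simp

lemma indexing_fun_le:
  assumes "tau 0 = -\<infinity>" "is_maximiser g beta a" "ereal a \<le> tau n"
  shows "indexing_fun g tau beta \<le> n"
proof -
  obtain k where "1 \<le> k" "k \<le> n" "tau (k - 1) \<le> ereal a" "ereal a \<le> tau k"
    using exists_piece_containing[OF assms(1,3)] .
  then have "indexing_fun g tau beta \<le> k"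
    unfolding indexing_fun_eq_Least using assms(2) by (blast intro: Least_le)
  with \<open>k \<le> n\<close> show ?thesis by simp
qed

lemma indexing_fun_has_maximiser:
  assumes "tau 0 = -\<infinity>" "tau N = \<infinity>" "is_maximiser g beta a"
  shows "\<exists>a. is_maximiser g beta a \<and> ereal a \<le> tau (indexing_fun g tau beta)"
proof -
  obtain k where "1 \<le> k" "tau (k - 1) \<le> ereal a" "ereal a \<le> tau k"
    using exists_piece_containing[of tau a N] assms by auto
  with assms(3) have "\<exists>k. 1 \<le> k \<and>
      (\<exists>a. is_maximiser g beta a \<and> tau (k - 1) \<le> ereal a \<and> ereal a \<le> tau k)"
    by blast
  from LeastI_ex[OF this] show ?thesis
    unfolding indexing_fun_eq_Least by blast
qed

lemma indexing_fun_mono: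
  assumes "tau 0 = -\<infinity>" "tau N = \<infinity>" and maximiser: "\<And>beta. \<exists>a. is_maximiser g beta a"
  shows "mono (indexing_fun g tau)"
proof (rule monoI)
  fix beta1 beta2 :: real
  assume "beta1 \<le> beta2"
  show "indexing_fun g tau beta1 \<le> indexing_fun g tau beta2"
  proof (cases "beta1 = beta2")
    case False
    obtain a2 where a2: "is_maximiser g beta2 a2" "ereal a2 \<le> tau (indexing_fun g tau beta2)"
      using indexing_fun_has_maximiser[OF assms(1,2)] maximiser by blast
    obtain a1 where a1: "is_maximiser g beta1 a1"
      using maximiser by blast
    have "a1 \<le> a2"
      using is_maximiser_mono[OF a1 a2(1)] \<open>beta1 \<le> beta2\<close> False by simp
    then have "ereal a1 \<le> tau (indexing_fun g tau beta2)"
      using a2(2) by (meson ereal_less_eq(3) order_trans)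
    then show ?thesis
      by (rule indexing_fun_le[where tau = tau, OF assms(1) a1])
  qed simp
qed

theorem lemma5:
  fixes g :: "real \<Rightarrow> real" and N :: nat and tau :: "nat \<Rightarrow> ereal" and p :: "nat \<Rightarrow> quad"
  assumes "consistent_pwq g N tau p"
  shows "mono (indexing_fun g tau)"
proof (rule indexing_fun_mono)
  show "tau 0 = -\<infinity>" "tau N = \<infinity>"
    using assms unfolding consistent_pwq_def pw_quadratic_def by auto
  have "N \<ge> 1"
    using assms unfolding consistent_pwq_def pw_quadratic_def by simp
  then show "\<exists>a. is_maximiser g beta a" for beta
    using assms unfolding consistent_pwq_def strongly_convex_quad_def
    by (intro Min_qeval_has_maximiser[where K = "{1..N}" and p = p]) auto
qed

end
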